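(* Let the state space be a compact metric space (metric $d$) with reference measure $\mu$, and let $a(x,x')$ be a transition density for which there exist a probability density $h$ and constants $0<c_a\le C_a<\infty$ with $c_ah(x)\le a(x',x)\le C_ah(x)$ for all $x,x'$, and $$\Delta(x',x):=\sup_{x''}\frac{|a(x,x'')-a(x',x'')|}{h(x'')}\to0\quad\text{as }d(x,x')\to0.$$ For a probability density $g$, let $X_1,\dots,X_N$ be i.i.d. from $g$. Then for every $\varepsilon>0$, $$\mathbf P\big[\|B(A^*E_N(g),b)-B(A^*g,b)\|_1>\varepsilon\big]\to0$$ exponentially fast in $N$, uniformly over all densities $g$ and all likelihoods $b\ge0$ with $0<\int h(x)b(x)\,d\mu(x)<\infty$.
   Context: $A^*f(x)=\int f(x')a(x',x)\,d\mu(x')$, extended to probability measures; $E_N(g)$ is the empirical distribution of $X_1,\dots,X_N$, so $A^*E_N(g)(x)=\frac1N\sum_ia(X_i,x)$. $B(f,b)(x)=f(x)b(x)/\int fb\,d\mu$ (Bayes operator). $\|\cdot\|_1$ is the $L_1(\mu)$ norm. *)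

theory Defs
  imports "HOL-Probability.Probability"
begin

definition Astar :: "'a measure \<Rightarrow> ('a \<Rightarrow> 'a \<Rightarrow> real) \<Rightarrow> ('a \<Rightarrow> real) \<Rightarrow> 'a \<Rightarrow> real" where
  "Astar \<mu> a f x = (\<integral>x'. f x' * a x' x \<partial>\<mu>)"

text \<open>A* applied to the empirical distribution of the sample X_0,...,X_{N-1}.\<close>
definition Astar_emp :: "('a \<Rightarrow> 'a \<Rightarrow> real) \<Rightarrow> nat \<Rightarrow> (nat \<Rightarrow> 'a) \<Rightarrow> 'a \<Rightarrow> real" where
  "Astar_emp a N X x = (1 / real N) * (\<Sum>i<N. a (X i) x)"

definition Bayes :: "'a measure \<Rightarrow> ('a \<Rightarrow> real) \<Rightarrow> ('a \<Rightarrow> real) \<Rightarrow> 'a \<Rightarrow> real" where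
  "Bayes \<mu> f b x = f x * b x / (\<integral>y. f y * b y \<partial>\<mu>)"

definition L1dist :: "'a measure \<Rightarrow> ('a \<Rightarrow> real) \<Rightarrow> ('a \<Rightarrow> real) \<Rightarrow> real" where
  "L1dist \<mu> f g = (\<integral>x. \<bar>f x - g x\<bar> \<partial>\<mu>)"

definition is_density :: "'a measure \<Rightarrow> ('a \<Rightarrow> real) \<Rightarrow> bool" where
  "is_density \<mu> f \<longleftrightarrow> f \<in> borel_measurable \<mu> \<and> (\<forall>x. 0 \<le> f x) \<and>
     integrable \<mu> f \<and> (\<integral>x. f x \<partial>\<mu>) = 1"

end

theory Submission
  imports Defs
begin

text \<open>
  Cover the compact state space by finitely many Borel cells \<open>S\<^sub>j\<close> with centres \<open>y\<^sub>j\<close> and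
  diameter below \<open>\<delta>\<close>; by the uniform smallness of \<open>\<Delta>\<close>, \<open>a(z, \<cdot>)\<close> and \<open>a(y\<^sub>j, \<cdot>)\<close> then differ by
  at most \<open>e h\<close> for \<open>z \<in> S\<^sub>j\<close>. Replacing each \<open>a(X\<^sub>i, x)\<close> by the value at the centre of its cell
  turns \<open>A* E\<^sub>N(g) - A* g\<close> into a combination of the deviations of the empirical cell
  frequencies from the cell probabilities. Off the event that one of these \<open>m\<close> deviations
  exceeds \<open>t\<close>, whose probability is at most \<open>2 m exp(-2 t\<^sup>2 N)\<close> by Hoeffding's inequality,
  we get \<open>|A* E\<^sub>N(g) - A* g| \<le> (2 e + m C\<^sub>a t) h\<close>. Both \<open>A* E\<^sub>N(g)\<close> and \<open>A* g\<close> lie between \<open>c\<^sub>a h\<close>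
  and \<open>C\<^sub>a h\<close>, and on such densities the Bayes operator is Lipschitz from the distance
  \<open>sup |f\<^sub>1 - f\<^sub>2| / h\<close> to \<open>L\<^sub>1\<close> with constant \<open>(c\<^sub>a + C\<^sub>a) / c\<^sub>a\<^sup>2\<close>, whatever the likelihood \<open>b\<close>:
  both normalising constants are at least \<open>c\<^sub>a \<integral> h b\<close>. No constant depends on \<open>g\<close> or \<open>b\<close>.
\<close>

definition empirical_prob :: "nat \<Rightarrow> (nat \<Rightarrow> 'a) \<Rightarrow> 'a set \<Rightarrow> real" where
  "empirical_prob N X A = (\<Sum>i<N. indicator A (X i)) / real N"

lemma compact_finite_ball_cover:
  fixes \<delta> :: real
  assumes "compact (UNIV :: 'a::metric_space set)" and "\<delta> > 0"
  obtains m :: nat and y :: "nat \<Rightarrow> 'a::metric_space" where "(\<Union>j<m. ball (y j) \<delta>) = UNIV"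
proof -
  have "UNIV \<subseteq> (\<Union>c. ball c \<delta>)"
    using assms(2) by (metis UN_I centre_in_ball subsetI)
  then obtain F :: "'a set" where F: "F \<subseteq> UNIV" "finite F" "UNIV \<subseteq> (\<Union>c\<in>F. ball c \<delta>)"
    by (rule compactE_image[OF assms(1) open_ball])
  obtain ys where ys: "set ys = F"
    using finite_list F(2) by blast
  have "x \<in> (\<Union>j<length ys. ball (ys ! j) \<delta>)" for x
  proof -
    obtain c where "c \<in> set ys" "x \<in> ball c \<delta>"
      using F(3) ys by blast
    then show ?thesis
      by (auto simp: in_set_conv_nth)
  qed
  then have "(\<Union>j<length ys. ball (ys ! j) \<delta>) = UNIV"
    by blast
  then show thesis
    by (rule that)
qed

lemma compact_finite_borel_partition:
  fixes \<delta> :: real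
  assumes "compact (UNIV :: 'a::metric_space set)" and "\<delta> > 0"
  obtains m :: nat and C :: "nat \<Rightarrow> 'a::metric_space set" and y :: "nat \<Rightarrow> 'a"
  where "0 < m" "\<And>j. j < m \<Longrightarrow> C j \<in> sets borel" "\<And>x. \<exists>!j. j < m \<and> x \<in> C j"
    "\<And>j x. j < m \<Longrightarrow> x \<in> C j \<Longrightarrow> dist (y j) x < \<delta>"
proof -
  obtain m :: nat and y :: "nat \<Rightarrow> 'a" where balls: "(\<Union>j<m. ball (y j) \<delta>) = UNIV"
    by (rule compact_finite_ball_cover[OF assms])
  define C where "C = disjointed (\<lambda>j. ball (y j) \<delta>)"
  have "(\<Union>j<m. C j) = (\<Union>j<m. ball (y j) \<delta>)"
    unfolding C_def using finite_UN_disjointed_eq[of _ m] by (simp add: atLeast0LessThan)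
  then have cover: "\<exists>j<m. x \<in> C j" for x
    unfolding balls by blast
  show thesis
  proof (rule that)
    show "0 < m"
      using cover[of undefined] by auto
    show "C j \<in> sets borel" if "j < m" for j
      unfolding C_def disjointed_def by auto
    show "\<exists>!j. j < m \<and> x \<in> C j" for x
    proof (rule ex_ex1I)
      show "\<exists>j. j < m \<and> x \<in> C j"
        using cover by blast
      show "j = k" if "j < m \<and> x \<in> C j" "k < m \<and> x \<in> C k" for j k
      proof (rule ccontr)
        assume "j \<noteq> k"
        then have "C j \<inter> C k = {}"
          unfolding C_def by (metis UNIV_I disjoint_family_disjointed disjoint_family_onD)
        with that show False
          by auto
      qed
    qed
    show "dist (y j) x < \<delta>" if "j < m" "x \<in> C j" for j x
      using that disjointed_subset unfolding C_def by fastforce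
  qed
qed

lemma indep_vars_PiM_components:
  assumes M: "\<And>i. i \<in> I \<Longrightarrow> prob_space (M i)" and "I \<noteq> {}"
  shows "prob_space.indep_vars (PiM I M) M (\<lambda>i X. X i) I"
proof -
  interpret P: prob_space "PiM I M"
    by (rule prob_space_PiM) (rule M)
  have "distr (PiM I M) (PiM I M) (\<lambda>X. \<lambda>i\<in>I. X i) = distr (PiM I M) (PiM I M) (\<lambda>X. X)"
    by (rule distr_cong) (auto simp: space_PiM PiE_def extensional_restrict)
  also have "\<dots> = PiM I M"
    by simp
  also have "\<dots> = PiM I (\<lambda>i. distr (PiM I M) (M i) (\<lambda>X. X i))"
    by (intro PiM_cong refl) (simp add: distr_PiM_component M)
  finally show ?thesis
    using \<open>I \<noteq> {}\<close> by (subst P.indep_vars_iff_distr_eq_PiM') auto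
qed

lemma hoeffding_empirical_prob:
  assumes "prob_space \<nu>" and A: "A \<in> sets \<nu>" and "N > 0" and "t \<ge> 0"
  shows "measure (PiM {..<N} (\<lambda>_. \<nu>))
      {X \<in> space (PiM {..<N} (\<lambda>_. \<nu>)). t \<le> \<bar>empirical_prob N X A - measure \<nu> A\<bar>}
    \<le> 2 * exp (- (2 * t\<^sup>2) * real N)"
proof -
  define P where "P = PiM {..<N} (\<lambda>_. \<nu>)"
  interpret P: prob_space P
    unfolding P_def by (rule prob_space_PiM) (rule assms(1))
  have indep: "P.indep_vars (\<lambda>_. \<nu>) (\<lambda>i X. X i) {..<N}"
    unfolding P_def using assms(1,3) by (intro indep_vars_PiM_components) auto
  have expectation: "P.expectation (\<lambda>X. indicator A (X i)) = measure \<nu> A" if "i < N" for i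
  proof -
    have "(\<lambda>X. X i) \<in> measurable P \<nu>"
      unfolding P_def using that by simp
    then have "P.expectation (\<lambda>X. indicator A (X i)) = (\<integral>x. (indicator A x :: real) \<partial>distr P \<nu> (\<lambda>X. X i))"
      using A by (intro integral_distr[where g = "\<lambda>X. X i" and f = "indicator A", symmetric]) simp_all
    also have "distr P \<nu> (\<lambda>X. X i) = \<nu>"
      unfolding P_def using assms(1) that by (intro distr_PiM_component) auto
    finally show ?thesis
      using A by simp
  qed
  interpret H: Hoeffding_ineq P "{..<N}" "\<lambda>i X. indicator A (X i)" "\<lambda>_. 0" "\<lambda>_. 1"
     "\<Sum>i<N. P.expectation (\<lambda>X. indicator A (X i))"
  proof unfold_locales
    show "P.indep_vars (\<lambda>_. borel) (\<lambda>i X. indicator A (X i)) {..<N}"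
      by (rule P.indep_vars_compose2[OF indep]) (use A in auto)
  qed (auto simp: indicator_def)
  have "{X \<in> space P. t \<le> \<bar>empirical_prob N X A - measure \<nu> A\<bar>}
      = {X \<in> space P. real N * t \<le> \<bar>(\<Sum>i<N. indicator A (X i)) - (\<Sum>i<N. P.expectation (\<lambda>X. indicator A (X i)))\<bar>}"
    using \<open>N > 0\<close> by (auto simp: expectation empirical_prob_def field_simps)
  also have "P.prob \<dots> \<le> 2 * exp (-2 * (real N * t)\<^sup>2 / (\<Sum>i<N. (1 - 0)\<^sup>2))"
    using H.Hoeffding_ineq_abs_ge[of "real N * t"] assms(3,4) by simp
  also have "\<dots> = 2 * exp (- (2 * t\<^sup>2) * real N)"
    using \<open>N > 0\<close> by (simp add: power2_eq_square)
  finally show ?thesis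
    unfolding P_def .
qed

lemma empirical_probs_deviation:
  assumes "prob_space \<nu>" and C: "\<And>j. j < m \<Longrightarrow> C j \<in> sets \<nu>" and "N > 0" and "t \<ge> 0"
  defines "E \<equiv> {X \<in> space (PiM {..<N} (\<lambda>_. \<nu>)).
    \<exists>j<m. t \<le> \<bar>empirical_prob N X (C j) - measure \<nu> (C j)\<bar>}"
  shows "E \<in> sets (PiM {..<N} (\<lambda>_. \<nu>))"
    and "measure (PiM {..<N} (\<lambda>_. \<nu>)) E \<le> 2 * real m * exp (- (2 * t\<^sup>2) * real N)"
proof -
  define P where "P = PiM {..<N} (\<lambda>_. \<nu>)"
  define D where "D j = {X \<in> space P. t \<le> \<bar>empirical_prob N X (C j) - measure \<nu> (C j)\<bar>}" for j
  have D: "D j \<in> sets P" if "j < m" for j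
  proof -
    have [measurable]: "C j \<in> sets \<nu>"
      using C that .
    show ?thesis
      unfolding D_def P_def empirical_prob_def by measurable
  qed
  have E: "E = (\<Union>j<m. D j)"
    unfolding E_def D_def P_def by blast
  then show "E \<in> sets (PiM {..<N} (\<lambda>_. \<nu>))"
    using D unfolding P_def by auto
  have "measure P E \<le> (\<Sum>j<m. measure P (D j))"
    unfolding E using D by (intro measure_UNION_le) auto
  also have "\<dots> \<le> (\<Sum>j<m. 2 * exp (- (2 * t\<^sup>2) * real N))"
    unfolding D_def P_def using hoeffding_empirical_prob[OF assms(1) C assms(3,4)]
    by (intro sum_mono) simp
  finally show "measure (PiM {..<N} (\<lambda>_. \<nu>)) E \<le> 2 * real m * exp (- (2 * t\<^sup>2) * real N)"
    unfolding P_def by simp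
qed

lemma empirical_mean_deviation_le:
  fixes f :: "'a \<Rightarrow> real" and c :: "nat \<Rightarrow> real"
  assumes "prob_space \<nu>" and f: "integrable \<nu> f" and C: "\<And>j. j < m \<Longrightarrow> C j \<in> sets \<nu>"
    and "N > 0" and approx: "\<And>x. \<bar>f x - (\<Sum>j<m. c j * indicator (C j) x)\<bar> \<le> \<eta>"
  shows "\<bar>(\<Sum>i<N. f (X i)) / real N - (\<integral>x. f x \<partial>\<nu>)\<bar>
    \<le> 2 * \<eta> + (\<Sum>j<m. \<bar>c j\<bar> * \<bar>empirical_prob N X (C j) - measure \<nu> (C j)\<bar>)"
proof -
  interpret prob_space \<nu>
    by (fact assms(1))
  define s where "s x = (\<Sum>j<m. c j * indicator (C j) x)" for x
  have s: "integrable \<nu> s"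
    unfolding s_def using C by (intro Bochner_Integration.integrable_sum Bochner_Integration.integrable_mult_right integrable_real_indicator) (auto simp: emeasure_finite less_top[symmetric])
  have empirical: "\<bar>(\<Sum>i<N. f (X i)) / real N - (\<Sum>i<N. s (X i)) / real N\<bar> \<le> \<eta>"
  proof -
    have "\<bar>\<Sum>i<N. f (X i) - s (X i)\<bar> \<le> (\<Sum>i<N. \<eta>)"
      using approx unfolding s_def by (intro order_trans[OF sum_abs sum_mono])
    then show ?thesis
      using \<open>N > 0\<close> by (simp add: sum_subtractf diff_divide_distrib[symmetric] divide_le_eq mult.commute)
  qed
  have expected: "\<bar>(\<integral>x. s x \<partial>\<nu>) - (\<integral>x. f x \<partial>\<nu>)\<bar> \<le> \<eta>"
  proof -
    have "\<bar>(\<integral>x. s x - f x \<partial>\<nu>)\<bar> \<le> (\<integral>x. \<eta> \<partial>\<nu>)"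
      using approx s f unfolding s_def
      by (intro order_trans[OF integral_abs_bound integral_mono]) (auto simp: abs_minus_commute)
    then show ?thesis
      using s f by (simp add: prob_space)
  qed
  have "(\<Sum>i<N. s (X i)) / real N = (\<Sum>j<m. c j * empirical_prob N X (C j))"
    unfolding s_def empirical_prob_def
    by (simp only: sum_divide_distrib sum_distrib_left times_divide_eq_right) (rule sum.swap)
  moreover have "(\<integral>x. s x \<partial>\<nu>) = (\<Sum>j<m. c j * measure \<nu> (C j))"
    unfolding s_def using C
    by (subst Bochner_Integration.integral_sum) (auto simp: emeasure_finite less_top[symmetric])
  ultimately have "(\<Sum>i<N. s (X i)) / real N - (\<integral>x. s x \<partial>\<nu>)
      = (\<Sum>j<m. c j * (empirical_prob N X (C j) - measure \<nu> (C j)))"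
    by (simp add: right_diff_distrib sum_subtractf)
  then have "\<bar>(\<Sum>i<N. s (X i)) / real N - (\<integral>x. s x \<partial>\<nu>)\<bar>
      \<le> (\<Sum>j<m. \<bar>c j\<bar> * \<bar>empirical_prob N X (C j) - measure \<nu> (C j)\<bar>)"
    by (simp add: order_trans[OF sum_abs] abs_mult)
  with empirical expected show ?thesis
    by linarith
qed

lemma normalized_diff_le:
  fixes u v w Z\<^sub>1 Z\<^sub>2 c C d H :: real
  assumes "0 < c" "0 < H" "c * H \<le> Z\<^sub>1" "c * H \<le> Z\<^sub>2" "\<bar>Z\<^sub>1 - Z\<^sub>2\<bar> \<le> d * H"
    and "\<bar>u - v\<bar> \<le> d * w" "0 \<le> v" "v \<le> C * w"
  shows "\<bar>u / Z\<^sub>1 - v / Z\<^sub>2\<bar> \<le> (c + C) * d / (c\<^sup>2 * H) * w"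
proof -
  have "0 < c * H"
    using assms(1,2) by simp
  then have Z: "0 < c * H" "0 < Z\<^sub>1" "0 < Z\<^sub>2"
    using assms(3,4) by linarith+
  have "0 \<le> d * w" "0 \<le> C * w" "0 \<le> d * H"
    using assms(5-8) by linarith+
  have "u / Z\<^sub>1 - v / Z\<^sub>2 = (u - v) / Z\<^sub>1 + v * (Z\<^sub>2 - Z\<^sub>1) / (Z\<^sub>1 * Z\<^sub>2)"
    using Z by (simp add: field_simps)
  then have triangle: "\<bar>u / Z\<^sub>1 - v / Z\<^sub>2\<bar> \<le> \<bar>(u - v) / Z\<^sub>1\<bar> + \<bar>v * (Z\<^sub>2 - Z\<^sub>1) / (Z\<^sub>1 * Z\<^sub>2)\<bar>"
    by (simp only: abs_triangle_ineq)
  moreover have "\<bar>(u - v) / Z\<^sub>1\<bar> \<le> d * w / (c * H)"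
    unfolding abs_divide using Z assms(3,6) \<open>0 \<le> d * w\<close> by (intro frac_le) simp_all
  moreover have "\<bar>v * (Z\<^sub>2 - Z\<^sub>1) / (Z\<^sub>1 * Z\<^sub>2)\<bar> \<le> (C * w) * (d * H) / ((c * H) * (c * H))"
    unfolding abs_divide abs_mult
  proof (intro frac_le)
    show "\<bar>v\<bar> * \<bar>Z\<^sub>2 - Z\<^sub>1\<bar> \<le> C * w * (d * H)"
      using assms(5,7,8) \<open>0 \<le> C * w\<close> by (intro mult_mono) (simp_all add: abs_minus_commute)
    show "c * H * (c * H) \<le> \<bar>Z\<^sub>1\<bar> * \<bar>Z\<^sub>2\<bar>"
      using Z assms(3,4) by (intro mult_mono) simp_all
  qed (use Z \<open>0 \<le> C * w\<close> \<open>0 \<le> d * H\<close> in simp_all)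
  ultimately have "\<bar>u / Z\<^sub>1 - v / Z\<^sub>2\<bar> \<le> d * w / (c * H) + (C * w) * (d * H) / ((c * H) * (c * H))"
    by linarith
  also have "\<dots> = (c + C) * d / (c\<^sup>2 * H) * w"
    using assms(1,2) by (simp add: field_simps power2_eq_square)
  finally show ?thesis .
qed

lemma weighted_between:
  fixes f h b c C :: real
  assumes "c * h \<le> f \<and> f \<le> C * h" "0 \<le> b" "0 \<le> h" "0 < c"
  shows "0 \<le> f * b" and "c * (h * b) \<le> f * b" and "f * b \<le> C * (h * b)"
proof -
  have "0 \<le> c * h"
    using assms(3,4) by simp
  then show "0 \<le> f * b"
    using assms(1,2) by simp
  show "c * (h * b) \<le> f * b" "f * b \<le> C * (h * b)"
    using assms(1,2) by (auto simp: mult.assoc[symmetric] intro!: mult_right_mono)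
qed

lemma weighted_integral_between:
  fixes f h b :: "'a \<Rightarrow> real"
  assumes hb: "integrable \<mu> (\<lambda>x. h x * b x)" and b: "b \<in> borel_measurable \<mu>" "\<And>x. 0 \<le> b x"
    and h: "\<And>x. 0 \<le> h x" and "0 < c"
    and f: "f \<in> borel_measurable \<mu>" "\<And>x. c * h x \<le> f x \<and> f x \<le> C * h x"
  shows "integrable \<mu> (\<lambda>x. f x * b x)" and "c * (\<integral>x. h x * b x \<partial>\<mu>) \<le> (\<integral>x. f x * b x \<partial>\<mu>)"
proof -
  note weighted = weighted_between[OF f(2) b(2) h \<open>0 < c\<close>]
  show integrable: "integrable \<mu> (\<lambda>x. f x * b x)"
  proof (rule Bochner_Integration.integrable_bound[OF integrable_mult_right[OF hb, of C]])
    show "(\<lambda>x. f x * b x) \<in> borel_measurable \<mu>"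
      using f(1) b(1) by measurable
    show "AE x in \<mu>. norm (f x * b x) \<le> norm (C * (h x * b x))"
      using weighted by (intro AE_I2) (smt (verit) real_norm_def)
  qed
  have "c * (\<integral>x. h x * b x \<partial>\<mu>) = (\<integral>x. c * (h x * b x) \<partial>\<mu>)"
    by simp
  also have "\<dots> \<le> (\<integral>x. f x * b x \<partial>\<mu>)"
    using integrable hb weighted by (intro integral_mono) auto
  finally show "c * (\<integral>x. h x * b x \<partial>\<mu>) \<le> (\<integral>x. f x * b x \<partial>\<mu>)" .
qed

lemma weighted_integral_diff_le:
  fixes f\<^sub>1 f\<^sub>2 h b :: "'a \<Rightarrow> real"
  assumes "integrable \<mu> (\<lambda>x. f\<^sub>1 x * b x)" "integrable \<mu> (\<lambda>x. f\<^sub>2 x * b x)"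
    and "integrable \<mu> (\<lambda>x. h x * b x)" "\<And>x. 0 \<le> b x" "\<And>x. \<bar>f\<^sub>1 x - f\<^sub>2 x\<bar> \<le> d * h x"
  shows "\<bar>(\<integral>x. f\<^sub>1 x * b x \<partial>\<mu>) - (\<integral>x. f\<^sub>2 x * b x \<partial>\<mu>)\<bar> \<le> d * (\<integral>x. h x * b x \<partial>\<mu>)"
proof -
  have "\<bar>(\<integral>x. f\<^sub>1 x * b x \<partial>\<mu>) - (\<integral>x. f\<^sub>2 x * b x \<partial>\<mu>)\<bar> = \<bar>\<integral>x. (f\<^sub>1 x - f\<^sub>2 x) * b x \<partial>\<mu>\<bar>"
    using assms(1,2) by (simp add: left_diff_distrib)
  also have "\<dots> \<le> (\<integral>x. d * (h x * b x) \<partial>\<mu>)"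
  proof (intro order_trans[OF integral_abs_bound integral_mono])
    show "integrable \<mu> (\<lambda>x. \<bar>(f\<^sub>1 x - f\<^sub>2 x) * b x\<bar>)"
      using assms(1,2) by (simp add: left_diff_distrib)
    show "\<bar>(f\<^sub>1 x - f\<^sub>2 x) * b x\<bar> \<le> d * (h x * b x)" for x
      using assms(4,5)[of x] by (simp add: abs_mult mult.assoc[symmetric] mult_right_mono)
  qed (use assms(3) in simp)
  finally show ?thesis
    by simp
qed

lemma L1dist_Bayes_le:
  fixes f\<^sub>1 f\<^sub>2 h b :: "'a \<Rightarrow> real"
  assumes hb: "integrable \<mu> (\<lambda>x. h x * b x)" "(\<integral>x. h x * b x \<partial>\<mu>) > 0"
    and b: "b \<in> borel_measurable \<mu>" "\<And>x. 0 \<le> b x" and h: "\<And>x. 0 \<le> h x"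
    and f: "f\<^sub>1 \<in> borel_measurable \<mu>" "f\<^sub>2 \<in> borel_measurable \<mu>" and "0 < c"
    and between: "\<And>x. c * h x \<le> f\<^sub>1 x \<and> f\<^sub>1 x \<le> C * h x" "\<And>x. c * h x \<le> f\<^sub>2 x \<and> f\<^sub>2 x \<le> C * h x"
    and close: "\<And>x. \<bar>f\<^sub>1 x - f\<^sub>2 x\<bar> \<le> d * h x"
  shows "L1dist \<mu> (Bayes \<mu> f\<^sub>1 b) (Bayes \<mu> f\<^sub>2 b) \<le> (c + C) * d / c\<^sup>2"
proof -
  define H where "H = (\<integral>x. h x * b x \<partial>\<mu>)"
  note Z\<^sub>1 = weighted_integral_between[OF hb(1) b h \<open>0 < c\<close> f(1) between(1), folded H_def]
  note Z\<^sub>2 = weighted_integral_between[OF hb(1) b h \<open>0 < c\<close> f(2) between(2), folded H_def]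
  have "0 < H"
    using hb(2) unfolding H_def .
  have pointwise: "\<bar>Bayes \<mu> f\<^sub>1 b x - Bayes \<mu> f\<^sub>2 b x\<bar> \<le> (c + C) * d / (c\<^sup>2 * H) * (h x * b x)" for x
  proof -
    have "\<bar>f\<^sub>1 x * b x - f\<^sub>2 x * b x\<bar> \<le> d * (h x * b x)"
      using close[of x] b(2)[of x]
      by (simp add: left_diff_distrib[symmetric] abs_mult mult.assoc[symmetric] mult_right_mono)
    then show ?thesis
      unfolding Bayes_def
      by (rule normalized_diff_le[OF \<open>0 < c\<close> \<open>0 < H\<close> Z\<^sub>1(2) Z\<^sub>2(2)
            weighted_integral_diff_le[OF Z\<^sub>1(1) Z\<^sub>2(1) hb(1) b(2) close, folded H_def] _
            weighted_between(1,3)[OF between(2) b(2) h \<open>0 < c\<close>]])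
  qed
  have "integrable \<mu> (\<lambda>x. \<bar>Bayes \<mu> f\<^sub>1 b x - Bayes \<mu> f\<^sub>2 b x\<bar>)"
  proof (rule Bochner_Integration.integrable_bound[OF integrable_mult_right[OF hb(1)]])
    show "(\<lambda>x. \<bar>Bayes \<mu> f\<^sub>1 b x - Bayes \<mu> f\<^sub>2 b x\<bar>) \<in> borel_measurable \<mu>"
      unfolding Bayes_def using f b(1) by measurable
    show "AE x in \<mu>. norm \<bar>Bayes \<mu> f\<^sub>1 b x - Bayes \<mu> f\<^sub>2 b x\<bar>
        \<le> norm ((c + C) * d / (c\<^sup>2 * H) * (h x * b x))"
      using order_trans[OF pointwise abs_ge_self] by (intro AE_I2) simp
  qed
  then have "L1dist \<mu> (Bayes \<mu> f\<^sub>1 b) (Bayes \<mu> f\<^sub>2 b) \<le> (\<integral>x. (c + C) * d / (c\<^sup>2 * H) * (h x * b x) \<partial>\<mu>)"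
    unfolding L1dist_def using pointwise hb(1) by (intro integral_mono) simp_all
  also have "\<dots> = (c + C) * d / c\<^sup>2"
    using \<open>0 < H\<close> unfolding H_def by simp
  finally show ?thesis .
qed

lemma prob_space_density_is_density:
  assumes "is_density \<mu> g"
  shows "prob_space (density \<mu> g)"
proof (rule prob_spaceI)
  have g: "g \<in> borel_measurable \<mu>" "\<And>x. 0 \<le> g x" "integrable \<mu> g" "(\<integral>x. g x \<partial>\<mu>) = 1"
    using assms unfolding is_density_def by auto
  have "emeasure (density \<mu> g) (space (density \<mu> g)) = (\<integral>\<^sup>+ x. ennreal (g x) * indicator (space \<mu>) x \<partial>\<mu>)"
    using g(1) by (simp add: emeasure_density)
  also have "\<dots> = (\<integral>\<^sup>+ x. ennreal (g x) \<partial>\<mu>)"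
    by (intro nn_integral_cong) simp
  also have "\<dots> = ennreal (\<integral>x. g x \<partial>\<mu>)"
    using g(2,3) by (intro nn_integral_eq_integral) auto
  finally show "emeasure (density \<mu> g) (space (density \<mu> g)) = 1"
    using g(4) by simp
qed

lemma Astar_measurable:
  assumes "sigma_finite_measure \<mu>" and a: "(\<lambda>(x, y). a x y) \<in> borel_measurable (\<mu> \<Otimes>\<^sub>M \<mu>)"
    and g: "g \<in> borel_measurable \<mu>"
  shows "Astar \<mu> a g \<in> borel_measurable \<mu>"
proof -
  have "(\<lambda>p. (snd p, fst p)) \<in> measurable (\<mu> \<Otimes>\<^sub>M \<mu>) (\<mu> \<Otimes>\<^sub>M \<mu>)"
    by (intro measurable_Pair measurable_fst measurable_snd)
  from measurable_comp[OF this a]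
  have "(\<lambda>p. a (snd p) (fst p)) \<in> borel_measurable (\<mu> \<Otimes>\<^sub>M \<mu>)"
    by (simp add: comp_def case_prod_beta)
  then have "(\<lambda>(x, x'). g x' * a x' x) \<in> borel_measurable (\<mu> \<Otimes>\<^sub>M \<mu>)"
    using g unfolding case_prod_beta by measurable
  then show ?thesis
    unfolding Astar_def[abs_def]
    by (rule sigma_finite_measure.borel_measurable_lebesgue_integral[OF assms(1)])
qed

lemma Astar_eq_integral_density:
  assumes "g \<in> borel_measurable \<mu>" "\<And>x. 0 \<le> g x" "(\<lambda>x'. a x' x) \<in> borel_measurable \<mu>"
  shows "Astar \<mu> a g x = (\<integral>x'. a x' x \<partial>density \<mu> g)"
  unfolding Astar_def using integral_density[OF assms(3,1)] assms(2) by simp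

lemma Astar_between:
  assumes g: "is_density \<mu> g" and a: "(\<lambda>x'. a x' x) \<in> borel_measurable \<mu>"
    and between: "\<And>x'. lo \<le> a x' x \<and> a x' x \<le> hi"
  shows "lo \<le> Astar \<mu> a g x \<and> Astar \<mu> a g x \<le> hi"
proof -
  interpret prob_space "density \<mu> g"
    using g by (rule prob_space_density_is_density)
  have "integrable (density \<mu> g) (\<lambda>x'. a x' x)"
  proof (rule integrable_const_bound[where B = "\<bar>lo\<bar> + \<bar>hi\<bar>"])
    show "AE x' in density \<mu> g. norm (a x' x) \<le> \<bar>lo\<bar> + \<bar>hi\<bar>"
      using between by (intro AE_I2) (smt (verit) real_norm_def)
  qed (use a in simp)
  then have "lo \<le> (\<integral>x'. a x' x \<partial>density \<mu> g)" "(\<integral>x'. a x' x \<partial>density \<mu> g) \<le> hi"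
    using between by (auto intro!: integral_ge_const integral_le_const)
  moreover have "Astar \<mu> a g x = (\<integral>x'. a x' x \<partial>density \<mu> g)"
    using g a unfolding is_density_def by (intro Astar_eq_integral_density) auto
  ultimately show ?thesis
    by simp
qed

lemma Astar_emp_between:
  assumes "N > 0" and "\<And>x'. lo \<le> a x' x \<and> a x' x \<le> hi"
  shows "lo \<le> Astar_emp a N X x \<and> Astar_emp a N X x \<le> hi"
proof -
  have "real N * lo \<le> (\<Sum>i<N. a (X i) x)" "(\<Sum>i<N. a (X i) x) \<le> real N * hi"
    using sum_mono[of "{..<N}" "\<lambda>_. lo" "\<lambda>i. a (X i) x"] sum_mono[of "{..<N}" "\<lambda>i. a (X i) x" "\<lambda>_. hi"]
      assms(2) by auto
  then show ?thesis
    using assms(1) unfolding Astar_emp_def by (simp add: field_simps)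
qed

text \<open>Since \<open>r / 0 = 0\<close>, the hypothesis on the difference quotients says nothing where \<open>h\<close>
  vanishes; there the kernel itself has to vanish.\<close>
lemma kernel_step_approx:
  fixes a :: "'a::metric_space \<Rightarrow> 'a \<Rightarrow> real" and m :: nat
  assumes unique: "\<exists>!j. j < m \<and> z \<in> C j" and near: "\<And>j. j < m \<Longrightarrow> z \<in> C j \<Longrightarrow> dist (y j) z < \<delta>"
    and Delta: "\<And>u v. dist u v < \<delta> \<Longrightarrow> \<bar>a u x - a v x\<bar> / h x \<le> e"
    and "0 \<le> h x" and vanish: "\<And>u. h x = 0 \<Longrightarrow> a u x = 0"
  shows "\<bar>a z x - (\<Sum>j<m. a (y j) x * indicator (C j) z)\<bar> \<le> e * h x"
proof -
  obtain j where j: "j < m" "z \<in> C j"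
    using unique by blast
  have "(\<Sum>k<m. a (y k) x * indicator (C k) z) = (\<Sum>k<m. if k = j then a (y j) x else 0)"
    using unique j by (intro sum.cong) (auto simp: indicator_def)
  also have "\<dots> = a (y j) x"
    using j by simp
  finally have step: "(\<Sum>k<m. a (y k) x * indicator (C k) z) = a (y j) x" .
  have "\<bar>a (y j) x - a z x\<bar> \<le> e * h x"
  proof (cases "h x = 0")
    case True
    then show ?thesis
      using vanish by simp
  next
    case False
    then show ?thesis
      using Delta[OF near[OF j]] \<open>0 \<le> h x\<close> by (simp add: divide_le_eq)
  qed
  then show ?thesis
    unfolding step by (simp add: abs_minus_commute)
qed

locale mixing_kernel =
  fixes \<mu> :: "'a measure" and a :: "'a \<Rightarrow> 'a \<Rightarrow> real" and h :: "'a \<Rightarrow> real" and c C :: real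
  assumes sigma_finite: "sigma_finite_measure \<mu>" and space_eq: "space \<mu> = UNIV"
    and kernel_measurable: "(\<lambda>(x, y). a x y) \<in> borel_measurable (\<mu> \<Otimes>\<^sub>M \<mu>)"
    and row_measurable: "\<And>x'. a x' \<in> borel_measurable \<mu>"
    and h_nonneg: "\<And>x. 0 \<le> h x" and c_pos: "0 < c"
    and kernel_between: "\<And>x x'. c * h x \<le> a x' x \<and> a x' x \<le> C * h x"
begin

lemma column_measurable: "(\<lambda>x'. a x' x) \<in> borel_measurable \<mu>"
  using measurable_Pair1[OF kernel_measurable, of x] space_eq by simp

lemma abs_kernel_le: "\<bar>a x' x\<bar> \<le> C * h x"
  using kernel_between[of x x'] h_nonneg[of x] c_pos by (smt (verit) mult_nonneg_nonneg)

lemma kernel_eq_0_if_h_eq_0: "h x = 0 \<Longrightarrow> a x' x = 0"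
  using kernel_between[of x x'] by simp

lemma Astar_emp_close_Astar:
  fixes m :: nat
  assumes g: "is_density \<mu> g" and cells: "\<And>j. j < m \<Longrightarrow> S j \<in> sets \<mu>"
    and approx: "\<And>x x'. \<bar>a x' x - (\<Sum>j<m. a (y j) x * indicator (S j) x')\<bar> \<le> e * h x"
    and "N > 0"
    and freq: "\<And>j. j < m \<Longrightarrow> \<bar>empirical_prob N X (S j) - measure (density \<mu> g) (S j)\<bar> \<le> t"
  shows "\<bar>Astar_emp a N X x - Astar \<mu> a g x\<bar> \<le> (2 * e + real m * C * t) * h x"
proof -
  interpret \<nu>: prob_space "density \<mu> g"
    using g by (rule prob_space_density_is_density)
  have g_meas: "g \<in> borel_measurable \<mu>" "\<And>x. 0 \<le> g x"
    using g unfolding is_density_def by auto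
  have "integrable (density \<mu> g) (\<lambda>x'. a x' x)"
    using column_measurable abs_kernel_le by (intro \<nu>.integrable_const_bound[where B = "C * h x"] AE_I2) auto
  then have "\<bar>(\<Sum>i<N. a (X i) x) / real N - (\<integral>x'. a x' x \<partial>density \<mu> g)\<bar>
      \<le> 2 * (e * h x) + (\<Sum>j<m. \<bar>a (y j) x\<bar> * \<bar>empirical_prob N X (S j) - measure (density \<mu> g) (S j)\<bar>)"
    using cells \<open>N > 0\<close> approx by (intro empirical_mean_deviation_le[OF \<nu>.prob_space_axioms]) auto
  also have "(\<Sum>j<m. \<bar>a (y j) x\<bar> * \<bar>empirical_prob N X (S j) - measure (density \<mu> g) (S j)\<bar>)
      \<le> (\<Sum>j<m. C * h x * t)"
    using abs_kernel_le freq by (intro sum_mono mult_mono) (auto intro: order_trans[OF abs_ge_zero])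
  finally show ?thesis
    unfolding Astar_emp_def Astar_eq_integral_density[OF g_meas column_measurable]
    by (simp add: algebra_simps)
qed

lemma L1dist_Bayes_Astar_emp_le:
  fixes m :: nat
  assumes g: "is_density \<mu> g"
    and b: "b \<in> borel_measurable \<mu>" "\<And>x. 0 \<le> b x" "integrable \<mu> (\<lambda>x. h x * b x)"
      "(\<integral>x. h x * b x \<partial>\<mu>) > 0"
    and cells: "\<And>j. j < m \<Longrightarrow> S j \<in> sets \<mu>"
    and approx: "\<And>x x'. \<bar>a x' x - (\<Sum>j<m. a (y j) x * indicator (S j) x')\<bar> \<le> e * h x"
    and "N > 0"
    and freq: "\<And>j. j < m \<Longrightarrow> \<bar>empirical_prob N X (S j) - measure (density \<mu> g) (S j)\<bar> \<le> t"
  shows "L1dist \<mu> (Bayes \<mu> (Astar_emp a N X) b) (Bayes \<mu> (Astar \<mu> a g) b)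
    \<le> (c + C) * (2 * e + real m * C * t) / c\<^sup>2"
proof (rule L1dist_Bayes_le[OF b(3,4,1,2) h_nonneg _ _ c_pos _ _
      Astar_emp_close_Astar[OF g cells approx \<open>N > 0\<close> freq]])
  show "Astar_emp a N X \<in> borel_measurable \<mu>"
    unfolding Astar_emp_def[abs_def] using row_measurable by measurable
  show "Astar \<mu> a g \<in> borel_measurable \<mu>"
    using g unfolding is_density_def by (intro Astar_measurable[OF sigma_finite kernel_measurable]) simp
  show "c * h x \<le> Astar_emp a N X x \<and> Astar_emp a N X x \<le> C * h x" for x
    using \<open>N > 0\<close> kernel_between by (rule Astar_emp_between)
  show "c * h x \<le> Astar \<mu> a g x \<and> Astar \<mu> a g x \<le> C * h x" for x
    using g column_measurable kernel_between by (rule Astar_between)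
qed

lemma Bayes_emp_deviation_event:
  fixes m :: nat
  assumes g: "is_density \<mu> g"
    and b: "b \<in> borel_measurable \<mu>" "\<And>x. 0 \<le> b x" "integrable \<mu> (\<lambda>x. h x * b x)"
      "(\<integral>x. h x * b x \<partial>\<mu>) > 0"
    and cells: "\<And>j. j < m \<Longrightarrow> S j \<in> sets \<mu>"
    and approx: "\<And>x x'. \<bar>a x' x - (\<Sum>j<m. a (y j) x * indicator (S j) x')\<bar> \<le> e * h x"
    and "N > 0" and "0 \<le> t" and \<epsilon>: "(c + C) * (2 * e + real m * C * t) / c\<^sup>2 \<le> \<epsilon>"
  defines "P \<equiv> PiM {..<N} (\<lambda>_. density \<mu> g)"
  shows "\<exists>E \<in> sets P.
    {X \<in> space P. L1dist \<mu> (Bayes \<mu> (Astar_emp a N X) b) (Bayes \<mu> (Astar \<mu> a g) b) > \<epsilon>} \<subseteq> E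
    \<and> measure P E \<le> 2 * real m * exp (- (2 * t\<^sup>2) * real N)"
proof -
  define E where "E = {X \<in> space P. \<exists>j<m. t \<le> \<bar>empirical_prob N X (S j) - measure (density \<mu> g) (S j)\<bar>}"
  have prob: "prob_space (density \<mu> g)"
    using g by (rule prob_space_density_is_density)
  have cells': "S j \<in> sets (density \<mu> g)" if "j < m" for j
    using cells[OF that] by simp
  have "{X \<in> space P. L1dist \<mu> (Bayes \<mu> (Astar_emp a N X) b) (Bayes \<mu> (Astar \<mu> a g) b) > \<epsilon>} \<subseteq> E"
    unfolding E_def
  proof (intro subsetI CollectI conjI)
    fix X
    assume X: "X \<in> {X \<in> space P. L1dist \<mu> (Bayes \<mu> (Astar_emp a N X) b) (Bayes \<mu> (Astar \<mu> a g) b) > \<epsilon>}"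
    then show "X \<in> space P"
      by simp
    show "\<exists>j<m. t \<le> \<bar>empirical_prob N X (S j) - measure (density \<mu> g) (S j)\<bar>"
    proof (rule ccontr)
      assume "\<not> ?thesis"
      then have "\<bar>empirical_prob N X (S j) - measure (density \<mu> g) (S j)\<bar> \<le> t" if "j < m" for j
        using that by auto
      from L1dist_Bayes_Astar_emp_le[OF g b cells approx \<open>N > 0\<close> this] X \<epsilon> show False
        by simp
    qed
  qed
  moreover have "E \<in> sets P"
    unfolding E_def P_def by (rule empirical_probs_deviation(1)[OF prob cells' \<open>N > 0\<close> \<open>0 \<le> t\<close>])
  moreover have "measure P E \<le> 2 * real m * exp (- (2 * t\<^sup>2) * real N)"
    unfolding E_def P_def by (rule empirical_probs_deviation(2)[OF prob cells' \<open>N > 0\<close> \<open>0 \<le> t\<close>])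
  ultimately show ?thesis
    by blast
qed

end

theorem lemma11:
  fixes \<mu> :: "'a::metric_space measure"
    and a :: "'a \<Rightarrow> 'a \<Rightarrow> real"
    and h :: "'a \<Rightarrow> real"
    and c_a C_a \<epsilon> :: real
  assumes compact: "compact (UNIV :: 'a set)"
    and mu_borel: "sets \<mu> = sets borel"
    and mu_sf: "sigma_finite_measure \<mu>"
    and a_meas: "(\<lambda>(x, y). a x y) \<in> borel_measurable (\<mu> \<Otimes>\<^sub>M \<mu>)"
    and a_trans: "\<And>x. is_density \<mu> (a x)"
    and h_dens: "is_density \<mu> h"
    and const_pos: "0 < c_a" "c_a \<le> C_a"
    and a_bounds: "\<And>x x'. c_a * h x \<le> a x' x \<and> a x' x \<le> C_a * h x"
    and Delta: "\<forall>e>0. \<exists>\<delta>>0. \<forall>x x'. dist x x' < \<delta> \<longrightarrow>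
                  (\<forall>x''. \<bar>a x x'' - a x' x''\<bar> / h x'' \<le> e)"
    and eps: "\<epsilon> > 0"
  shows "\<exists>K r. r > 0 \<and>
     (\<forall>g b N. is_density \<mu> g \<longrightarrow> b \<in> borel_measurable \<mu> \<longrightarrow> (\<forall>x. 0 \<le> b x) \<longrightarrow>
        integrable \<mu> (\<lambda>x. h x * b x) \<longrightarrow> (\<integral>x. h x * b x \<partial>\<mu>) > 0 \<longrightarrow> N > 0 \<longrightarrow>
        (\<exists>E \<in> sets (PiM {..<N} (\<lambda>_. density \<mu> g)).
           {X \<in> space (PiM {..<N} (\<lambda>_. density \<mu> g)).
              L1dist \<mu> (Bayes \<mu> (Astar_emp a N X) b) (Bayes \<mu> (Astar \<mu> a g) b) > \<epsilon>} \<subseteq> E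
           \<and> measure (PiM {..<N} (\<lambda>_. density \<mu> g)) E \<le> K * exp (- r * real N)))"
proof -
  interpret mixing_kernel \<mu> a h c_a C_a
  proof (rule mixing_kernel.intro)
    show "space \<mu> = UNIV"
      using sets_eq_imp_space_eq[OF mu_borel] by simp
    show "a x' \<in> borel_measurable \<mu>" "0 \<le> h x" for x x'
      using a_trans[of x'] h_dens unfolding is_density_def by simp_all
  qed (fact mu_sf a_meas const_pos(1) a_bounds)+
  define d where "d = \<epsilon> * c_a\<^sup>2 / (c_a + C_a)"
  define e where "e = d / 3"
  have "e > 0"
    unfolding e_def d_def using eps const_pos by simp
  with Delta obtain \<delta> where "\<delta> > 0"
    and \<delta>: "\<And>x x' x''. dist x x' < \<delta> \<Longrightarrow> \<bar>a x x'' - a x' x''\<bar> / h x'' \<le> e"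
    by blast
  obtain m :: nat and S :: "nat \<Rightarrow> 'a set" and y :: "nat \<Rightarrow> 'a" where "0 < m"
    and cells: "\<And>j. j < m \<Longrightarrow> S j \<in> sets borel" and unique: "\<And>x. \<exists>!j. j < m \<and> x \<in> S j"
    and near: "\<And>j x. j < m \<Longrightarrow> x \<in> S j \<Longrightarrow> dist (y j) x < \<delta>"
    using compact_finite_borel_partition[OF compact \<open>\<delta> > 0\<close>] by blast
  have approx: "\<bar>a x' x - (\<Sum>j<m. a (y j) x * indicator (S j) x')\<bar> \<le> e * h x" for x x'
    using unique near \<delta> h_nonneg kernel_eq_0_if_h_eq_0 by (rule kernel_step_approx)
  define t where "t = e / (C_a * real m)"
  have "t > 0"
    unfolding t_def using \<open>e > 0\<close> \<open>0 < m\<close> const_pos by simp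
  have "c_a + C_a \<noteq> 0" "c_a \<noteq> 0"
    using const_pos by linarith+
  then have "(c_a + C_a) * d / c_a\<^sup>2 = \<epsilon>"
    unfolding d_def by simp
  moreover have "2 * e + real m * C_a * t = d"
    unfolding t_def e_def using \<open>0 < m\<close> const_pos by simp
  ultimately have bound: "(c_a + C_a) * (2 * e + real m * C_a * t) / c_a\<^sup>2 \<le> \<epsilon>"
    by simp
  show ?thesis
  proof (intro exI conjI allI impI)
    show "0 < 2 * t\<^sup>2"
      using \<open>t > 0\<close> by simp
  qed (rule Bayes_emp_deviation_event[OF _ _ _ _ _ cells[unfolded mu_borel[symmetric]] approx _
        less_imp_le[OF \<open>t > 0\<close>] bound]; blast)
qed

end
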